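(* Let $w:\{0,1\}^L\to\mathbb{R}_{\ge 0}$ be a generic fitness landscape that induces the standard staircase triangulation, with genotypes written as subsets of $\{1,\dots,L\}$. Then: (i) if a single mutant $\{i\}$ is a peak, then every other peak contains $i$; in particular, two distinct single mutants cannot both be peaks; (ii) for distinct $i,j,k$, the double mutants $\{i,j\}$ and $\{j,k\}$ cannot both be peaks; (iii) for distinct $i,j,k,l$, the triple mutant $\{i,j,k\}$ and the double mutant $\{k,l\}$ cannot both be peaks.
   Context: A genotype $g\in\{0,1\}^L$ is identified with the set $\{i: g_i=1\}\subseteq\{1,\dots,L\}$ and with a vertex of $[0,1]^L$. The triangulation induced by $w$ is the regular subdivision of $[0,1]^L$ obtained by projecting the upper faces of $\mathrm{conv}\{(g,w_g)\}\subset\mathbb{R}^{L+1}$; $w$ is generic if all $w_g$ are distinct and this subdivision is a triangulation. A peak is a genotype all of whose Hamming neighbours (sets differing in exactly one element) have strictly lower fitness. The standard staircase triangulation consists of the $L!$ simplices $\{g_0\subset g_1\subset\dots\subset g_L\}$ with $g_0=\emptyset$, $g_L=\{1,\dots,L\}$ and $|g_k|=k$. *)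

theory Defs
  imports Complex_Main
begin

text \<open>Genotypes in {0,1}^L are identified with subsets of {1..L}.
  A fitness landscape is a function w :: nat set \<Rightarrow> real, of which only
  the values on genotypes matter.\<close>

definition genotypes :: "nat \<Rightarrow> nat set set" where
  "genotypes L = Pow {1..L}"

definition hamming_neighbour :: "nat \<Rightarrow> nat set \<Rightarrow> nat set \<Rightarrow> bool" where
  "hamming_neighbour L g h \<longleftrightarrow>
     g \<in> genotypes L \<and> h \<in> genotypes L \<and> card ((g - h) \<union> (h - g)) = 1"

definition is_peak :: "nat \<Rightarrow> (nat set \<Rightarrow> real) \<Rightarrow> nat set \<Rightarrow> bool" where
  "is_peak L w g \<longleftrightarrow> g \<in> genotypes L \<and>
     (\<forall>h. hamming_neighbour L g h \<longrightarrow> w h < w g)"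

definition staircase_simplex :: "nat \<Rightarrow> (nat \<Rightarrow> nat) \<Rightarrow> nat set set" where
  "staircase_simplex L \<pi> = {\<pi> ` {1..k} | k. k \<le> L}"

definition staircase_simplices :: "nat \<Rightarrow> nat set set set" where
  "staircase_simplices L = {staircase_simplex L \<pi> | \<pi>. bij_betw \<pi> {1..L} {1..L}}"

text \<open>An affine function on R^L evaluated at the vertex g of [0,1]^L:
  c + sum_{i in g} a_i.\<close>
definition affine_at :: "real \<Rightarrow> (nat \<Rightarrow> real) \<Rightarrow> nat set \<Rightarrow> real" where
  "affine_at c a g = c + (\<Sum>i\<in>g. a i)"

text \<open>A set S of vertices spans a cell of the regular subdivision induced by w
  (projection of an upper face of conv{(g,w_g)}) iff some non-vertical
  supporting hyperplane, i.e. the graph of an affine function h, lies weakly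
  above all lifted points and touches exactly the lifted points of S.\<close>
definition upper_cell :: "nat \<Rightarrow> (nat set \<Rightarrow> real) \<Rightarrow> nat set set \<Rightarrow> bool" where
  "upper_cell L w S \<longleftrightarrow> (\<exists>c a. \<forall>g\<in>genotypes L.
       (g \<in> S \<longrightarrow> affine_at c a g = w g) \<and> (g \<notin> S \<longrightarrow> w g < affine_at c a g))"

text \<open>Since the staircase
  simplices are full-dimensional and tile the cube, this is equivalent to the
  subdivision being exactly the staircase triangulation.\<close>
definition induces_staircase :: "nat \<Rightarrow> (nat set \<Rightarrow> real) \<Rightarrow> bool" where
  "induces_staircase L w \<longleftrightarrow> (\<forall>S\<in>staircase_simplices L. upper_cell L w S)"

text \<open>Generic: all fitness values distinct (the subdivision being a triangulation
  is already implied by inducing the staircase triangulation).\<close>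
definition generic :: "nat \<Rightarrow> (nat set \<Rightarrow> real) \<Rightarrow> bool" where
  "generic L w \<longleftrightarrow> inj_on w (genotypes L)"

end

theory Submission
  imports Defs
begin

text \<open>If A and B are incomparable, enumerate {1..L} as A \<inter> B, then A - B, then B - A, then
  the rest. The staircase simplex of this enumeration contains A \<inter> B, A and A \<union> B but,
  being a chain, not B. Its supporting affine function h is additive over disjoint unions, so
  w(A \<inter> B) + w(A \<union> B) - w A = h B > w B: the landscape is strictly supermodular on
  incomparable pairs. If two peaks A, B satisfy A - B = {x} and B \<noteq> A - {x}, then A \<inter> B = A - {x}
  and A \<union> B = insert x B are neighbours of the two peaks, so
  w(A \<inter> B) + w(A \<union> B) < w A + w B, a contradiction.\<close>

lemma image_nth_pred_atLeastAtMost: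
  assumes "k \<le> length xs"
  shows "(\<lambda>m. xs ! (m - 1)) ` {1..k} = set (take k xs)"
proof -
  have "(\<lambda>m. xs ! (m - 1)) ` {1..k} = (\<lambda>n. xs ! n) ` {..<k}"
  proof (rule set_eqI, rule iffI)
    fix x assume "x \<in> (\<lambda>m. xs ! (m - 1)) ` {1..k}"
    then obtain m where "m \<in> {1..k}" "x = xs ! (m - 1)" by blast
    then show "x \<in> (\<lambda>n. xs ! n) ` {..<k}" by (intro image_eqI[of _ _ "m - 1"]) auto
  next
    fix x assume "x \<in> (\<lambda>n. xs ! n) ` {..<k}"
    then obtain n where "n < k" "x = xs ! n" by blast
    then show "x \<in> (\<lambda>m. xs ! (m - 1)) ` {1..k}" by (intro image_eqI[of _ _ "n + 1"]) auto
  qed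
  also have "\<dots> = set (take k xs)"
    using assms by (auto simp: set_conv_nth) (metis nth_take)
  finally show ?thesis .
qed

lemma staircase_simplex_of_enumeration:
  assumes "distinct xs" and "set xs = {1..L}"
  obtains \<pi> where "bij_betw \<pi> {1..L} {1..L}"
    and "staircase_simplex L \<pi> = {set (take k xs) | k. k \<le> L}"
proof
  have len: "length xs = L" using distinct_card[OF assms(1)] assms(2) by simp
  define \<pi> where "\<pi> = (\<lambda>m. xs ! (m - 1))"
  have img: "\<And>k. k \<le> L \<Longrightarrow> \<pi> ` {1..k} = set (take k xs)"
    unfolding \<pi>_def using image_nth_pred_atLeastAtMost len by metis
  have "inj_on \<pi> {1..L}"
    unfolding \<pi>_def inj_on_def using assms(1) len by (auto simp: nth_eq_iff_index_eq)
  moreover have "\<pi> ` {1..L} = {1..L}" using img[of L] len assms(2) by simp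
  ultimately show "bij_betw \<pi> {1..L} {1..L}" by (simp add: bij_betw_def)
  have "\<And>g. (\<exists>k. g = \<pi> ` {1..k} \<and> k \<le> L) \<longleftrightarrow> (\<exists>k. g = set (take k xs) \<and> k \<le> L)"
    using img by metis
  then show "staircase_simplex L \<pi> = {set (take k xs) | k. k \<le> L}"
    unfolding staircase_simplex_def by simp
qed

lemma staircase_simplex_chain:
  assumes "g \<in> staircase_simplex L \<pi>" and "h \<in> staircase_simplex L \<pi>"
  shows "g \<subseteq> h \<or> h \<subseteq> g"
proof -
  obtain k k' where "g = \<pi> ` {1..k}" "h = \<pi> ` {1..k'}"
    using assms unfolding staircase_simplex_def by blast
  then show ?thesis using nat_le_linear[of k k'] by (auto intro!: image_mono)
qed

lemma staircase_simplex_through_flag: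
  assumes "X \<subseteq> Y" and "Y \<subseteq> Z" and "Z \<subseteq> {1..L}"
  obtains \<pi> where "bij_betw \<pi> {1..L} {1..L}"
    and "X \<in> staircase_simplex L \<pi>" "Y \<in> staircase_simplex L \<pi>" "Z \<in> staircase_simplex L \<pi>"
proof -
  have "finite Z" using assms(3) by (rule rev_finite_subset[OF finite_atLeastAtMost])
  then have "finite Y" using assms(2) by (rule rev_finite_subset)
  then have "finite X" using assms(1) by (rule rev_finite_subset)
  define l1 where "l1 = sorted_list_of_set X"
  define l2 where "l2 = sorted_list_of_set (Y - X)"
  define l3 where "l3 = sorted_list_of_set (Z - Y)"
  define l4 where "l4 = sorted_list_of_set ({1..L} - Z)"
  define xs where "xs = l1 @ l2 @ l3 @ l4"
  have s: "set l1 = X" "set l2 = Y - X" "set l3 = Z - Y" "set l4 = {1..L} - Z"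
    "distinct l1" "distinct l2" "distinct l3" "distinct l4"
    using \<open>finite Z\<close> \<open>finite Y\<close> \<open>finite X\<close> by (simp_all add: l1_def l2_def l3_def l4_def)
  have "distinct xs" unfolding xs_def using s assms by auto
  moreover have "set xs = {1..L}" unfolding xs_def using s assms by auto
  ultimately obtain \<pi> where bij: "bij_betw \<pi> {1..L} {1..L}"
    and S: "staircase_simplex L \<pi> = {set (take k xs) | k. k \<le> L}"
    by (rule staircase_simplex_of_enumeration)
  have mem: "set (take k xs) \<in> staircase_simplex L \<pi>" if "k \<le> length xs" for k
    using that S distinct_card \<open>distinct xs\<close> \<open>set xs = {1..L}\<close> by fastforce
  have "set (take (length l1) xs) = X"
    using s by (simp add: xs_def)
  moreover have "set (take (length l1 + length l2) xs) = Y"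
    using s assms(1) by (auto simp: xs_def)
  moreover have "set (take (length l1 + length l2 + length l3) xs) = Z"
    using s assms(1,2) by (auto simp: xs_def)
  ultimately show thesis
    using that[OF bij] mem[of "length l1"] mem[of "length l1 + length l2"]
      mem[of "length l1 + length l2 + length l3"] by (simp add: xs_def)
qed

lemma staircase_strict_supermodular:
  assumes stair: "induces_staircase L w"
    and A: "A \<subseteq> {1..L}" and B: "B \<subseteq> {1..L}"
    and "\<not> A \<subseteq> B" and "\<not> B \<subseteq> A"
  shows "w A + w B < w (A \<inter> B) + w (A \<union> B)"
proof -
  obtain \<pi> where bij: "bij_betw \<pi> {1..L} {1..L}"
    and S: "A \<inter> B \<in> staircase_simplex L \<pi>" "A \<in> staircase_simplex L \<pi>"
      "A \<union> B \<in> staircase_simplex L \<pi>"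
    using staircase_simplex_through_flag[of "A \<inter> B" A "A \<union> B" L] A B by auto
  have "B \<notin> staircase_simplex L \<pi>"
    using staircase_simplex_chain[OF S(2)] assms(4,5) by blast
  moreover have "staircase_simplex L \<pi> \<in> staircase_simplices L"
    unfolding staircase_simplices_def using bij by blast
  with stair obtain c a where ca: "\<forall>g\<in>genotypes L. (g \<in> staircase_simplex L \<pi> \<longrightarrow>
      affine_at c a g = w g) \<and> (g \<notin> staircase_simplex L \<pi> \<longrightarrow> w g < affine_at c a g)"
    unfolding induces_staircase_def upper_cell_def by blast
  moreover have "A \<inter> B \<in> genotypes L" "A \<in> genotypes L" "A \<union> B \<in> genotypes L" "B \<in> genotypes L"
    using A B by (auto simp: genotypes_def)
  ultimately have "affine_at c a (A \<inter> B) = w (A \<inter> B)" "affine_at c a A = w A"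
    "affine_at c a (A \<union> B) = w (A \<union> B)" "w B < affine_at c a B"
    using S by blast+
  moreover have "finite A" "finite B"
    using A B by (auto intro: rev_finite_subset[OF finite_atLeastAtMost])
  then have "sum a (A \<inter> B) + sum a (A \<union> B) = sum a A + sum a B"
    by (metis sum.union_inter add.commute)
  ultimately show ?thesis unfolding affine_at_def by linarith
qed

lemma hamming_neighbour_insert:
  assumes "g \<subseteq> {1..L}" "x \<in> {1..L}" "x \<notin> g"
  shows "hamming_neighbour L g (insert x g)" and "hamming_neighbour L (insert x g) g"
proof -
  have "(g - insert x g) \<union> (insert x g - g) = {x}" "(insert x g - g) \<union> (g - insert x g) = {x}"
    using assms by auto
  then show "hamming_neighbour L g (insert x g)" "hamming_neighbour L (insert x g) g"
    using assms unfolding hamming_neighbour_def genotypes_def by auto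
qed

lemma peak_gt_insert:
  assumes "is_peak L w g" "x \<in> {1..L}" "x \<notin> g"
  shows "w (insert x g) < w g"
  using assms hamming_neighbour_insert(1)[of g L x] unfolding is_peak_def genotypes_def by auto

lemma peak_gt_remove:
  assumes "is_peak L w g" "x \<in> g"
  shows "w (g - {x}) < w g"
proof -
  have "g \<subseteq> {1..L}" using assms(1) unfolding is_peak_def genotypes_def by auto
  then have "hamming_neighbour L (insert x (g - {x})) (g - {x})"
    using assms(2) by (intro hamming_neighbour_insert(2)) auto
  then show ?thesis using assms insert_Diff unfolding is_peak_def by metis
qed

lemma not_peaks_if_diff_singleton:
  assumes stair: "induces_staircase L w"
    and A: "is_peak L w A" and B: "is_peak L w B"
    and diff: "A - B = {x}" and "\<not> B \<subseteq> A"
  shows False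
proof -
  have "A \<subseteq> {1..L}" "B \<subseteq> {1..L}" using A B unfolding is_peak_def genotypes_def by auto
  then have "w A + w B < w (A \<inter> B) + w (A \<union> B)"
    using staircase_strict_supermodular[OF stair] diff assms(5) by blast
  moreover have "A \<inter> B = A - {x}" "A \<union> B = insert x B" using diff by auto
  moreover have "w (A - {x}) < w A" using peak_gt_remove[OF A] diff by blast
  moreover have "w (insert x B) < w B"
    using peak_gt_insert[OF B] diff \<open>A \<subseteq> {1..L}\<close> by blast
  ultimately show False by simp
qed

lemma singleton_peak_in_other_peaks:
  assumes stair: "induces_staircase L w"
    and i: "is_peak L w {i}" and g: "is_peak L w g" and "g \<noteq> {i}"
  shows "i \<in> g"
proof (rule ccontr)
  assume "i \<notin> g"
  show False
  proof (cases "g = {}")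
    case True
    have "i \<in> {1..L}" using i unfolding is_peak_def genotypes_def by auto
    then show False
      using peak_gt_remove[OF i, of i] peak_gt_insert[OF g, of i] True by simp
  next
    case False
    then show False
      using not_peaks_if_diff_singleton[OF stair i g, of i] \<open>i \<notin> g\<close> \<open>g \<noteq> {i}\<close> by auto
  qed
qed

theorem lemma1:
  fixes L :: nat and w :: "nat set \<Rightarrow> real"
  assumes nonneg: "\<forall>g\<in>genotypes L. w g \<ge> 0"
    and gen: "generic L w"
    and stair: "induces_staircase L w"
  shows "(\<forall>i\<in>{1..L}. is_peak L w {i} \<longrightarrow>
            (\<forall>g. is_peak L w g \<and> g \<noteq> {i} \<longrightarrow> i \<in> g))
       \<and> (\<forall>i\<in>{1..L}. \<forall>j\<in>{1..L}. i \<noteq> j \<longrightarrow> \<not> (is_peak L w {i} \<and> is_peak L w {j}))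
       \<and> (\<forall>i\<in>{1..L}. \<forall>j\<in>{1..L}. \<forall>k\<in>{1..L}. i \<noteq> j \<and> j \<noteq> k \<and> i \<noteq> k \<longrightarrow>
            \<not> (is_peak L w {i, j} \<and> is_peak L w {j, k}))
       \<and> (\<forall>i\<in>{1..L}. \<forall>j\<in>{1..L}. \<forall>k\<in>{1..L}. \<forall>l\<in>{1..L}.
            distinct [i, j, k, l] \<longrightarrow> \<not> (is_peak L w {i, j, k} \<and> is_peak L w {k, l}))"
proof (intro conjI ballI allI impI notI)
  fix i j k l
  show "i \<in> g" if "is_peak L w {i}" "is_peak L w g \<and> g \<noteq> {i}" for g
    using singleton_peak_in_other_peaks[OF stair] that by blast
  show False if "i \<noteq> j" "is_peak L w {i} \<and> is_peak L w {j}"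
    using singleton_peak_in_other_peaks[OF stair] that by blast
  show False if "i \<noteq> j \<and> j \<noteq> k \<and> i \<noteq> k" "is_peak L w {i, j} \<and> is_peak L w {j, k}"
    using not_peaks_if_diff_singleton[OF stair, of "{i, j}" "{j, k}" i] that by auto
  show False if "distinct [i, j, k, l]" "is_peak L w {i, j, k} \<and> is_peak L w {k, l}"
    using not_peaks_if_diff_singleton[OF stair, of "{k, l}" "{i, j, k}" l] that by auto
qed

end
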